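(* Let $a\neq 0$, $b$ be integers with $\gcd(a,b)=1$, let $k\ge 1$ be an integer, and let $c_1,e_1\in\mathbb{Q}\setminus\{0\}$, $c_0,e_0\in\mathbb{Q}$. Then there is no integer $q\ge 3$ such that the polynomial identity $$S_{a,b}^k(c_1x+c_0)=e_1x^q+e_0$$ holds in $\mathbb{Q}[x]$.
   Context: The Bernoulli polynomials $B_n(x)$ are defined by $\frac{t e^{tx}}{e^t-1}=\sum_{n\ge 0}B_n(x)\frac{t^n}{n!}$. For integers $a\neq 0$, $b$ with $\gcd(a,b)=1$ and an integer $k\ge 1$, define the polynomial $$S_{a,b}^k(x):=\frac{a^k}{k+1}\left(B_{k+1}\!\left(x+\frac{b}{a}\right)-B_{k+1}\!\left(\frac{b}{a}\right)\right)\in\mathbb{Q}[x].$$ *)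

theory Defs
  imports "HOL-Computational_Algebra.Polynomial"
begin

text \<open>Bernoulli numbers with B_1 = -1/2, i.e. the coefficients of t/(e^t - 1):
  B_0 = 1 and sum_{j=0}^{n} (n+1 choose j) B_j = 0 for n >= 1.\<close>
fun bernoulli :: "nat \<Rightarrow> rat" where
  "bernoulli n = (if n = 0 then 1 else
     - (\<Sum>j<n. of_nat (Suc n choose j) * bernoulli j) / of_nat (Suc n))"

declare bernoulli.simps [simp del]

definition bernpoly :: "nat \<Rightarrow> rat poly" where
  "bernpoly n = (\<Sum>j\<le>n. monom (of_nat (n choose j) * bernoulli j) (n - j))"

definition S_poly :: "int \<Rightarrow> int \<Rightarrow> nat \<Rightarrow> rat poly" where
  "S_poly a b k = smult (of_int a ^ k / of_nat (k + 1))
     (pcompose (bernpoly (k + 1)) [:of_int b / of_int a, 1:]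
      - [:poly (bernpoly (k + 1)) (of_int b / of_int a):])"

end

theory Submission
  imports Defs
begin

text \<open>After an affine change of variable the identity says that a nonzero multiple of the
  Bernoulli polynomial \<open>B\<^sub>n\<close>, \<open>n = k + 1\<close>, differs by a constant from \<open>e (v x + w)\<^sup>q\<close>.
  Comparing degrees gives \<open>q = n\<close>.  Since \<open>B\<^sub>n = x\<^sup>n - (n/2) x\<^sup>n\<^sup>-\<^sup>1 + (n choose 2)/6 x\<^sup>n\<^sup>-\<^sup>2 + \<dots>\<close>,
  comparing the three top coefficients gives \<open>e v\<^sup>n = 1\<close>, \<open>e v\<^sup>n\<^sup>-\<^sup>1 w = -1/2\<close> and
  \<open>e v\<^sup>n\<^sup>-\<^sup>2 w\<^sup>2 = 1/6\<close>; the square of the middle value equals the product of the outer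
  ones, i.e. \<open>1/4 = 1/6\<close>.\<close>

lemma bernoulli_0 [simp]: "bernoulli 0 = 1"
  by (simp add: bernoulli.simps)

lemma bernoulli_1: "bernoulli 1 = -1/2"
  by (simp add: bernoulli.simps)

lemma bernoulli_2: "bernoulli 2 = 1/6"
  by (simp add: bernoulli.simps numeral_2_eq_2 lessThan_Suc)

lemma coeff_bernpoly:
  "coeff (bernpoly n) i = (if i \<le> n then of_nat (n choose i) * bernoulli (n - i) else 0)"
proof -
  have "coeff (bernpoly n) i =
      (\<Sum>j\<le>n. if j = n - i \<and> i \<le> n then of_nat (n choose j) * bernoulli j else 0)"
    unfolding bernpoly_def coeff_sum coeff_monom by (rule sum.cong) auto
  also have "\<dots> = (if i \<le> n then of_nat (n choose (n - i)) * bernoulli (n - i) else 0)"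
    by (cases "i \<le> n") (simp_all add: sum.delta)
  finally show ?thesis
    by (simp add: binomial_symmetric[symmetric])
qed

lemma degree_bernpoly [simp]: "degree (bernpoly n) = n"
proof (rule antisym)
  show "degree (bernpoly n) \<le> n"
    by (rule degree_le) (simp add: coeff_bernpoly)
  show "n \<le> degree (bernpoly n)"
    by (rule le_degree) (simp add: coeff_bernpoly)
qed

lemma pcompose_power: "pcompose (p ^ n) r = pcompose p r ^ n"
  for p r :: "'a::comm_semiring_1 poly"
  by (induct n) (simp_all add: pcompose_mult pcompose_1)

lemma pcompose_monom_linear: "pcompose (monom e q) [:w, v:] = smult e ([:w, v:] ^ q)"
  for e v w :: "'a::comm_semiring_1"
  by (simp add: monom_altdef pcompose_smult pcompose_power pcompose_pCons)

lemma pcompose_linear_inverse: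
  fixes u c :: "'a::field"
  assumes "c \<noteq> 0"
  shows "pcompose [:u, c:] [:- u / c, 1 / c:] = [:0, 1:]"
  using assms by (simp add: pcompose_pCons)

lemma bernpoly_ne_smult_linear_power_plus_const:
  assumes "3 \<le> n"
  shows "bernpoly n \<noteq> smult e ([:w, v:] ^ n) + [:d:]"
proof
  assume eq: "bernpoly n = smult e ([:w, v:] ^ n) + [:d:]"
  have coeff_eq: "of_nat (n choose i) * bernoulli (n - i)
      = e * (of_nat (n choose i) * v ^ i * w ^ (n - i))"
    if "1 \<le> i" "i \<le> n" for i
    using arg_cong[OF eq, of "\<lambda>p. coeff p i"] that
    by (cases i) (simp_all add: coeff_bernpoly coeff_linear_poly_power del: of_nat_Suc)
  define m where "m = n - 2"
  have n: "n = m + 2" and "1 \<le> m"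
    using assms by (simp_all add: m_def)
  have top: "e * v ^ (m + 2) = 1"
    using coeff_eq[of n] n by simp
  have "of_nat n * (-1/2) = of_nat n * (e * v ^ (m + 1) * w)"
    using coeff_eq[of "m + 1"] n bernoulli_1 by (simp add: binomial_symmetric[of 1 n] mult_ac)
  then have sub1: "e * v ^ (m + 1) * w = -1/2"
    using n by (subst (asm) mult_left_cancel) simp_all
  have "of_nat (n choose m) * (1/6) = of_nat (n choose m) * (e * v ^ m * w\<^sup>2)"
    using coeff_eq[of m] \<open>1 \<le> m\<close> n by (simp add: bernoulli_2 mult_ac)
  then have sub2: "e * v ^ m * w\<^sup>2 = 1/6"
    using n by (subst (asm) mult_left_cancel) simp_all
  have "(e * v ^ (m + 1) * w)\<^sup>2 = (e * v ^ (m + 2)) * (e * v ^ m * w\<^sup>2)"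
    by (simp add: power2_eq_square algebra_simps)
  then have "(-1/2 :: rat)\<^sup>2 = 1 * (1/6)"
    by (simp only: top sub1 sub2)
  then show False
    by (simp add: power2_eq_square)
qed

lemma smult_bernpoly_ne_smult_linear_power:
  fixes A e v w c d :: rat
  assumes "A \<noteq> 0" and "e \<noteq> 0" and "v \<noteq> 0" and "3 \<le> q"
  shows "smult A (bernpoly n) + [:c:] \<noteq> smult e ([:w, v:] ^ q) + [:d:]"
proof
  assume eq: "smult A (bernpoly n) + [:c:] = smult e ([:w, v:] ^ q) + [:d:]"
  have deg_rhs: "degree (smult e ([:w, v:] ^ q) + [:d:]) = q"
    using assms(2-4) by (subst degree_add_eq_left) (auto simp: degree_power_eq)
  have "degree (smult A (bernpoly n) + [:c:]) \<le> n"
    by (intro degree_add_le) simp_all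
  then have "q \<le> n"
    using eq deg_rhs by simp
  then have "degree (smult A (bernpoly n) + [:c:]) = n"
    using assms(1,4) by (subst degree_add_eq_left) auto
  then have "n = q"
    using eq deg_rhs by simp
  have "bernpoly n = smult (inverse A) (smult e ([:w, v:] ^ q) + [:d:] - [:c:])"
    using arg_cong[OF eq, of "\<lambda>p. smult (inverse A) (p - [:c:])"] assms(1) by simp
  also have "\<dots> = smult (e / A) ([:w, v:] ^ n) + ([:d / A:] - [:c / A:])"
    using \<open>n = q\<close> by (simp add: smult_add_right smult_diff_right divide_inverse_commute)
  finally show False
    using bernpoly_ne_smult_linear_power_plus_const[of n "e / A" w v "d / A - c / A"]
      assms(4) \<open>n = q\<close> by simp
qed

theorem lemma3:
  fixes a b :: int and k :: nat and c1 c0 e1 e0 :: rat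
  assumes "a \<noteq> 0" and "gcd a b = 1" and "k \<ge> 1"
    and "c1 \<noteq> 0" and "e1 \<noteq> 0"
  shows "\<not> (\<exists>q::nat. q \<ge> 3 \<and>
           pcompose (S_poly a b k) [:c0, c1:] = monom e1 q + [:e0:])"
proof
  assume "\<exists>q::nat. q \<ge> 3 \<and> pcompose (S_poly a b k) [:c0, c1:] = monom e1 q + [:e0:]"
  then obtain q where "3 \<le> q" and eq: "pcompose (S_poly a b k) [:c0, c1:] = monom e1 q + [:e0:]"
    by blast
  define A :: rat where "A = of_int a ^ k / of_nat (k + 1)"
  define \<beta> :: rat where "\<beta> = of_int b / of_int a"
  define L where "L = [:- (\<beta> + c0) / c1, 1 / c1:]"
  have inverse: "pcompose [:\<beta>, 1:] (pcompose [:c0, c1:] L) = [:0, 1:]"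
    using pcompose_linear_inverse[OF assms(4), of "\<beta> + c0"]
    by (simp add: L_def pcompose_pCons algebra_simps)
  have "smult A (bernpoly (k + 1)) + [:- A * poly (bernpoly (k + 1)) \<beta>:]
      = smult A (bernpoly (k + 1) - [:poly (bernpoly (k + 1)) \<beta>:])"
    by (simp add: smult_diff_right)
  also have "\<dots> = pcompose (pcompose (S_poly a b k) [:c0, c1:]) L"
    unfolding S_poly_def A_def[symmetric] \<beta>_def[symmetric]
    by (simp only: pcompose_smult pcompose_diff pcompose_const pcompose_assoc[symmetric]
        inverse pcompose_idR)
  also have "\<dots> = smult e1 (L ^ q) + [:e0:]"
    unfolding eq by (simp add: L_def pcompose_add pcompose_monom_linear)
  finally show False
    using smult_bernpoly_ne_smult_linear_power[OF _ assms(5) _ \<open>3 \<le> q\<close>] assms(1,4)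
    unfolding L_def A_def by simp
qed

end
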